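(* For every election $(V,A,\succ)$ with $n=|V|\ge 1$ voters, every integer $k\ge 1$ and every $\beta\in[0,1]$, there exists a set $C\subseteq A$ with $|C|\le k$ that is $\big(\beta+(1-\beta)^k\big)$-undominated, i.e. for every $a\in A\setminus C$, $$\big|\{v\in V: a\succ_v C\}\big|\le \big\lfloor (\beta+(1-\beta)^k)\, n\big\rfloor .$$
   Context: An election $(V,A,\succ)$ consists of a finite nonempty set $V$ of $n$ voters, a finite nonempty set $A$ of candidates, and for each voter $v$ a strict linear order $\succ_v$ on $A$; $a\succeq_v b$ means $a=b$ or $a\succ_v b$. For $C\subseteq A$ and $a\in A\setminus C$, $a\succ_v C$ means $a\succ_v c$ for all $c\in C$. For $\alpha\ge 0$, a set $C\subseteq A$ is $\alpha$-undominated if $|\{v\in V: a\succ_v C\}|\le\lfloor \alpha n\rfloor$ for every $a\in A\setminus C$. *)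

theory Defs
  imports Complex_Main
begin

text \<open>An election: finite nonempty voter set V, finite nonempty candidate set A,
  and for each voter v a strict linear order P v on A (pairs (a,b) mean a is preferred to b).\<close>
definition election :: "'v set \<Rightarrow> 'a set \<Rightarrow> ('v \<Rightarrow> ('a \<times> 'a) set) \<Rightarrow> bool" where
  "election V A P \<longleftrightarrow> finite V \<and> V \<noteq> {} \<and> finite A \<and> A \<noteq> {} \<and>
     (\<forall>v\<in>V. strict_linear_order_on A (P v) \<and> P v \<subseteq> A \<times> A)"

definition prefers_over_set :: "('v \<Rightarrow> ('a \<times> 'a) set) \<Rightarrow> 'v \<Rightarrow> 'a \<Rightarrow> 'a set \<Rightarrow> bool" where
  "prefers_over_set P v a C \<longleftrightarrow> (\<forall>c\<in>C. (a, c) \<in> P v)"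

definition undominated :: "'v set \<Rightarrow> 'a set \<Rightarrow> ('v \<Rightarrow> ('a \<times> 'a) set) \<Rightarrow> real \<Rightarrow> 'a set \<Rightarrow> bool" where
  "undominated V A P \<alpha> C \<longleftrightarrow> C \<subseteq> A \<and>
     (\<forall>a\<in>A - C. int (card {v\<in>V. prefers_over_set P v a C}) \<le> \<lfloor>\<alpha> * real (card V)\<rfloor>)"

end

theory Submission
  imports Defs "HOL-Analysis.Brouwer_Fixpoint"
begin

text \<open>
  Fix \<open>\<delta> > 0\<close> and measure positions in a ranking by a distribution \<open>p\<close> on the candidates: \<open>b\<close> lies in
  the top \<open>t\<close>-portion of a voter's ranking if the candidates ranked at or above \<open>b\<close> have \<open>p\<close>-mass
  below \<open>t\<close>. A Sperner argument (Kuhn's lemma on a fine grid in the simplex of distributions) yields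
  a \<open>p\<close> under which every candidate lies in the top \<open>(\<beta> - \<delta>)\<close>-portion of at most \<open>\<beta> n\<close> rankings.
  In a fully labelled cell, a candidate violating this bound sits on the top face of the grid, which
  leaves little mass to the candidates on the bottom faces, while every other candidate lies in the
  top \<open>(\<beta> + \<delta>)\<close>-portion of more than \<open>\<beta> n\<close> rankings. This contradicts the averaging fact that
  in each single ranking the candidates of the top \<open>\<gamma>\<close>-portion have mass below \<open>\<gamma>\<close>.

  Let \<open>U\<^sub>v\<close> be the shortest top segment of \<open>v\<close>'s ranking of mass at least \<open>\<beta> - \<delta>\<close>. Some candidate lies
  in a \<open>(\<beta> - \<delta>)\<close>-fraction of any family of such segments, so \<open>k\<close> greedy choices leave at most
  \<open>(1 - \<beta> + \<delta>)\<^sup>k n\<close> segments unhit. A voter preferring \<open>a \<notin> C\<close> to all of \<open>C\<close> either has \<open>U\<^sub>v\<close>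
  disjoint from \<open>C\<close>, or ranks \<open>a\<close> above a member of \<open>U\<^sub>v\<close>, putting \<open>a\<close> in the top \<open>(\<beta> - \<delta>)\<close>-portion.
  Hence at most \<open>(\<beta> + (1 - \<beta>)\<^sup>k) n + k \<delta> n\<close> voters do, and a small \<open>\<delta>\<close> gives the integer bound.
\<close>

lemma strict_linear_order_on_has_bottom:
  assumes "strict_linear_order_on A r" "finite S" "S \<noteq> {}" "S \<subseteq> A"
  obtains b where "b \<in> S" "\<And>c. c \<in> S \<Longrightarrow> c \<noteq> b \<Longrightarrow> (c, b) \<in> r"
proof -
  have "transp_on S (\<lambda>x y. (x, y) \<in> r)" "totalp_on S (\<lambda>x y. (x, y) \<in> r)"
    using assms(1,4) unfolding strict_linear_order_on_def transp_on_def totalp_on_def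
      trans_def total_on_def by blast+
  then show thesis
    using Finite_Set.bex_greatest_element[OF assms(2,3)] that by blast
qed

lemma strict_linear_order_on_has_top:
  assumes "strict_linear_order_on A r" "finite S" "S \<noteq> {}" "S \<subseteq> A"
  obtains t where "t \<in> S" "\<And>c. c \<in> S \<Longrightarrow> c \<noteq> t \<Longrightarrow> (t, c) \<in> r"
proof -
  have "transp_on S (\<lambda>x y. (x, y) \<in> r)" "totalp_on S (\<lambda>x y. (x, y) \<in> r)"
    using assms(1,4) unfolding strict_linear_order_on_def transp_on_def totalp_on_def
      trans_def total_on_def by blast+
  then show thesis
    using Finite_Set.bex_least_element[OF assms(2,3)] that by blast
qed

definition weakly_preferred :: "'a set \<Rightarrow> ('a \<times> 'a) set \<Rightarrow> 'a \<Rightarrow> 'a set" where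
  "weakly_preferred A r b = {c\<in>A. c = b \<or> (c, b) \<in> r}"

definition rank_mass :: "'a set \<Rightarrow> ('a \<times> 'a) set \<Rightarrow> ('a \<Rightarrow> real) \<Rightarrow> 'a \<Rightarrow> real" where
  "rank_mass A r p b = sum p (weakly_preferred A r b)"

definition top_count ::
  "'v set \<Rightarrow> 'a set \<Rightarrow> ('v \<Rightarrow> ('a \<times> 'a) set) \<Rightarrow> ('a \<Rightarrow> real) \<Rightarrow> real \<Rightarrow> 'a \<Rightarrow> nat" where
  "top_count V A P p t a = card {v\<in>V. rank_mass A (P v) p a < t}"

lemma sum_rank_mass_less_lt:
  assumes slo: "strict_linear_order_on A r" and "finite A"
    and nonneg: "\<And>c. c \<in> A \<Longrightarrow> 0 \<le> p c" and "0 < \<gamma>"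
  shows "sum p {b\<in>A. rank_mass A r p b < \<gamma>} < \<gamma>"
proof (cases "{b\<in>A. rank_mass A r p b < \<gamma>} = {}")
  case True
  show ?thesis
    unfolding True using \<open>0 < \<gamma>\<close> by simp
next
  case False
  let ?S = "{b\<in>A. rank_mass A r p b < \<gamma>}"
  obtain b where b: "b \<in> ?S" "\<And>c. c \<in> ?S \<Longrightarrow> c \<noteq> b \<Longrightarrow> (c, b) \<in> r"
    using strict_linear_order_on_has_bottom[OF slo _ False] \<open>finite A\<close> by auto
  then have "?S \<subseteq> weakly_preferred A r b"
    unfolding weakly_preferred_def by auto
  then have "sum p ?S \<le> rank_mass A r p b"
    unfolding rank_mass_def using \<open>finite A\<close> nonneg
    by (intro sum_mono2) (auto simp: weakly_preferred_def)
  also have "\<dots> < \<gamma>"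
    using b(1) by simp
  finally show ?thesis .
qed

lemma sum_weighted_card_swap:
  assumes "finite A" "finite V"
  shows "(\<Sum>b\<in>A. real (card {v\<in>V. Q v b}) * p b) = (\<Sum>v\<in>V. sum p {b\<in>A. Q v b})"
proof -
  have "(\<Sum>b\<in>A. real (card {v\<in>V. Q v b}) * p b) = (\<Sum>b\<in>A. \<Sum>v\<in>V. if Q v b then p b else 0)"
    using assms by (simp add: sum.If_cases Int_def)
  also have "\<dots> = (\<Sum>v\<in>V. \<Sum>b\<in>A. if Q v b then p b else 0)"
    by (rule sum.swap)
  also have "\<dots> = (\<Sum>v\<in>V. sum p {b\<in>A. Q v b})"
    using assms by (simp add: sum.If_cases Int_def conj_commute)
  finally show ?thesis .
qed

lemma sum_weighted_top_count_less:
  assumes el: "election V A P" and nonneg: "\<And>c. c \<in> A \<Longrightarrow> 0 \<le> p c" and "0 < \<gamma>"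
  shows "(\<Sum>b\<in>A. real (top_count V A P p \<gamma> b) * p b) < real (card V) * \<gamma>"
proof -
  have fin: "finite V" "V \<noteq> {}" "finite A"
    using el unfolding election_def by auto
  have "(\<Sum>b\<in>A. real (top_count V A P p \<gamma> b) * p b)
      = (\<Sum>v\<in>V. sum p {b\<in>A. rank_mass A (P v) p b < \<gamma>})"
    unfolding top_count_def by (rule sum_weighted_card_swap[OF fin(3,1)])
  also have "\<dots> < (\<Sum>v\<in>V. \<gamma>)"
  proof (rule sum_strict_mono)
    fix v assume "v \<in> V"
    then have "strict_linear_order_on A (P v)"
      using el unfolding election_def by auto
    then show "sum p {b\<in>A. rank_mass A (P v) p b < \<gamma>} < \<gamma>"
      using sum_rank_mass_less_lt fin(3) nonneg \<open>0 < \<gamma>\<close> by blast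
  qed (use fin in auto)
  finally show ?thesis
    by simp
qed

lemma top_counts_ge_imp_less:
  assumes el: "election V A P" and nonneg: "\<And>c. c \<in> A \<Longrightarrow> 0 \<le> p c" and "sum p A = 1"
    and "0 < \<gamma>" "0 \<le> K" "Z \<subseteq> A"
    and counts: "\<And>a. a \<in> A - Z \<Longrightarrow> K \<le> real (top_count V A P p \<gamma> a)"
  shows "K * (1 - sum p Z) < real (card V) * \<gamma>"
proof -
  have "finite A"
    using el unfolding election_def by auto
  have "1 - sum p Z = sum p (A - Z)"
    using \<open>finite A\<close> \<open>Z \<subseteq> A\<close> \<open>sum p A = 1\<close> by (simp add: sum_diff finite_subset)
  then have "K * (1 - sum p Z) = (\<Sum>a\<in>A - Z. K * p a)"
    by (simp add: sum_distrib_left)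
  also have "\<dots> \<le> (\<Sum>a\<in>A - Z. real (top_count V A P p \<gamma> a) * p a)"
    using counts nonneg by (intro sum_mono mult_right_mono) auto
  also have "\<dots> \<le> (\<Sum>a\<in>A. real (top_count V A P p \<gamma> a) * p a)"
    using \<open>finite A\<close> nonneg by (intro sum_mono2) auto
  also have "\<dots> < real (card V) * \<gamma>"
    by (rule sum_weighted_top_count_less[OF el nonneg \<open>0 < \<gamma>\<close>])
  finally show ?thesis .
qed

lemma ex_element_in_many_sets:
  assumes "finite A" "A \<noteq> {}" and nonneg: "\<And>c. c \<in> A \<Longrightarrow> 0 \<le> p c" and "sum p A = 1"
    and "finite R" and sets: "\<And>v. v \<in> R \<Longrightarrow> U v \<subseteq> A \<and> \<theta> \<le> sum p (U v)"
  obtains c where "c \<in> A" "\<theta> * real (card R) \<le> real (card {v\<in>R. c \<in> U v})"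
proof -
  define X where "X c = real (card {v\<in>R. c \<in> U v})" for c
  have "\<theta> * real (card R) = (\<Sum>v\<in>R. \<theta>)"
    by simp
  also have "\<dots> \<le> (\<Sum>v\<in>R. sum p {c\<in>A. c \<in> U v})"
    using sets by (intro sum_mono) (simp add: Int_absorb1 Int_def[symmetric])
  also have "\<dots> = (\<Sum>c\<in>A. X c * p c)"
    unfolding X_def by (rule sum_weighted_card_swap[OF \<open>finite A\<close> \<open>finite R\<close>, symmetric])
  also have "\<dots> \<le> (\<Sum>c\<in>A. Max (X ` A) * p c)"
    using assms by (intro sum_mono mult_right_mono) auto
  also have "\<dots> = Max (X ` A)"
    using \<open>sum p A = 1\<close> by (simp add: sum_distrib_left[symmetric])
  moreover have "Max (X ` A) \<in> X ` A"
    using assms by (intro Max_in) auto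
  then obtain c where "c \<in> A" "X c = Max (X ` A)"
    by auto
  ultimately show thesis
    using that unfolding X_def by auto
qed

lemma greedy_hitting_set:
  assumes "finite A" "A \<noteq> {}" and nonneg: "\<And>c. c \<in> A \<Longrightarrow> 0 \<le> p c" and "sum p A = 1"
    and "finite V" and sets: "\<And>v. v \<in> V \<Longrightarrow> U v \<subseteq> A \<and> \<theta> \<le> sum p (U v)" and "\<theta> \<le> 1"
  shows "\<exists>C\<subseteq>A. card C \<le> k \<and> real (card {v\<in>V. U v \<inter> C = {}}) \<le> (1 - \<theta>) ^ k * real (card V)"
proof (induction k)
  case 0
  show ?case
    by (intro exI[of _ "{}"]) auto
next
  case (Suc k)
  then obtain C where C: "C \<subseteq> A" "card C \<le> k"
    "real (card {v\<in>V. U v \<inter> C = {}}) \<le> (1 - \<theta>) ^ k * real (card V)"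
    by blast
  define R where "R = {v\<in>V. U v \<inter> C = {}}"
  have "finite R"
    using \<open>finite V\<close> unfolding R_def by auto
  obtain c where c: "c \<in> A" "\<theta> * real (card R) \<le> real (card {v\<in>R. c \<in> U v})"
    using ex_element_in_many_sets[OF assms(1-4) \<open>finite R\<close>, of U \<theta>] sets unfolding R_def by auto
  have "{v\<in>V. U v \<inter> insert c C = {}} = R - {v\<in>R. c \<in> U v}"
    unfolding R_def by auto
  then have "real (card {v\<in>V. U v \<inter> insert c C = {}}) = real (card R) - real (card {v\<in>R. c \<in> U v})"
    using \<open>finite R\<close> by (simp add: card_Diff_subset card_mono of_nat_diff)
  also have "\<dots> \<le> (1 - \<theta>) * real (card R)"
    using c(2) by (simp add: algebra_simps)
  also have "\<dots> \<le> (1 - \<theta>) ^ Suc k * real (card V)"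
    using mult_left_mono[OF C(3), of "1 - \<theta>"] \<open>\<theta> \<le> 1\<close> unfolding R_def by (simp add: mult.assoc)
  finally have "real (card {v\<in>V. U v \<inter> insert c C = {}}) \<le> (1 - \<theta>) ^ Suc k * real (card V)" .
  moreover have "card (insert c C) \<le> Suc k"
    using C(1,2) finite_subset[OF C(1) \<open>finite A\<close>] by (simp add: card_insert_if)
  ultimately show ?case
    using C(1) c(1) by (intro exI[of _ "insert c C"]) auto
qed

definition cell_vertex :: "'a set \<Rightarrow> ('a \<Rightarrow> nat) \<Rightarrow> ('a \<Rightarrow> nat) \<Rightarrow> bool" where
  "cell_vertex A q r \<longleftrightarrow> (\<forall>a\<in>A. q a \<le> r a \<and> r a \<le> q a + 1)"

definition fully_labelled_cell :: "'a set \<Rightarrow> (('a \<Rightarrow> nat) \<Rightarrow> 'a \<Rightarrow> bool) \<Rightarrow> ('a \<Rightarrow> nat) \<Rightarrow> bool" where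
  "fully_labelled_cell A L q \<longleftrightarrow>
    (\<forall>a\<in>A. \<exists>r s. cell_vertex A q r \<and> cell_vertex A q s \<and> L r a \<and> \<not> L s a)"

lemma kuhn_lemma_bool:
  fixes G m :: nat and L :: "(nat \<Rightarrow> nat) \<Rightarrow> nat \<Rightarrow> bool"
  assumes "0 < G"
    and bottom: "\<And>x i. \<forall>j<m. x j \<le> G \<Longrightarrow> i < m \<Longrightarrow> x i = 0 \<Longrightarrow> \<not> L x i"
    and top: "\<And>x i. \<forall>j<m. x j \<le> G \<Longrightarrow> i < m \<Longrightarrow> x i = G \<Longrightarrow> L x i"
  obtains q where "\<forall>i<m. \<exists>r s. (\<forall>j<m. q j \<le> r j \<and> r j \<le> q j + 1) \<and>
    (\<forall>j<m. q j \<le> s j \<and> s j \<le> q j + 1) \<and> L r i \<and> \<not> L s i"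
proof -
  define label where "label x i = (if L x i then 1 else 0 :: nat)" for x i
  have "\<forall>x. (\<forall>i<m. x i \<le> G) \<longrightarrow> (\<forall>i<m. label x i = 0 \<or> label x i = 1)"
    "\<forall>x. (\<forall>i<m. x i \<le> G) \<longrightarrow> (\<forall>i<m. x i = 0 \<longrightarrow> label x i = 0)"
    "\<forall>x. (\<forall>i<m. x i \<le> G) \<longrightarrow> (\<forall>i<m. x i = G \<longrightarrow> label x i = 1)"
    using bottom top by (auto simp: label_def)
  then obtain q where cell: "\<forall>i<m. \<exists>r s. (\<forall>j<m. q j \<le> r j \<and> r j \<le> q j + 1) \<and>
      (\<forall>j<m. q j \<le> s j \<and> s j \<le> q j + 1) \<and> label r i \<noteq> label s i"
    by (rule kuhn_lemma[OF \<open>0 < G\<close>]) (rule that; assumption)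
  show thesis
  proof (rule that, intro allI impI)
    fix i assume "i < m"
    then obtain r s where "\<forall>j<m. q j \<le> r j \<and> r j \<le> q j + 1" "\<forall>j<m. q j \<le> s j \<and> s j \<le> q j + 1"
      "label r i \<noteq> label s i"
      using cell by blast
    moreover have "L r i \<and> \<not> L s i \<or> L s i \<and> \<not> L r i"
      using \<open>label r i \<noteq> label s i\<close> unfolding label_def by (auto split: if_splits)
    ultimately show "\<exists>r s. (\<forall>j<m. q j \<le> r j \<and> r j \<le> q j + 1) \<and>
        (\<forall>j<m. q j \<le> s j \<and> s j \<le> q j + 1) \<and> L r i \<and> \<not> L s i"
      by blast
  qed
qed

lemma kuhn_lemma_on_set:
  fixes G :: nat and L :: "('a \<Rightarrow> nat) \<Rightarrow> 'a \<Rightarrow> bool"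
  assumes "finite A" "0 < G"
    and bottom: "\<And>x a. \<forall>c\<in>A. x c \<le> G \<Longrightarrow> a \<in> A \<Longrightarrow> x a = 0 \<Longrightarrow> \<not> L x a"
    and top: "\<And>x a. \<forall>c\<in>A. x c \<le> G \<Longrightarrow> a \<in> A \<Longrightarrow> x a = G \<Longrightarrow> L x a"
  obtains q where "fully_labelled_cell A L q"
proof -
  define m where "m = card A"
  obtain e where e: "bij_betw e {0..<m} A"
    using ex_bij_betw_nat_finite[OF \<open>finite A\<close>] unfolding m_def by blast
  define idx where "idx = inv_into {0..<m} e"
  have idx: "idx a < m" "e (idx a) = a" if "a \<in> A" for a
    using that e bij_betw_inv_into_right[OF e] bij_betw_apply[OF bij_betw_inv_into[OF e]]
    unfolding idx_def by auto
  have e_idx: "e i \<in> A" "idx (e i) = i" if "i < m" for i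
    using that bij_betw_apply[OF e] bij_betw_inv_into_left[OF e] unfolding idx_def by auto
  have on_grid: "\<forall>c\<in>A. (x \<circ> idx) c \<le> G" if "\<forall>j<m. x j \<le> G" for x
    using that idx by auto
  obtain q where cell: "\<forall>i<m. \<exists>r s. (\<forall>j<m. q j \<le> r j \<and> r j \<le> q j + 1) \<and>
      (\<forall>j<m. q j \<le> s j \<and> s j \<le> q j + 1) \<and> L (r \<circ> idx) (e i) \<and> \<not> L (s \<circ> idx) (e i)"
  proof (rule kuhn_lemma_bool[OF \<open>0 < G\<close>])
    show "\<not> L (x \<circ> idx) (e i)" if "\<forall>j<m. x j \<le> G" "i < m" "x i = 0" for x i
      using bottom[OF on_grid[OF that(1)], of "e i"] e_idx[OF that(2)] that(3) by (simp add: comp_def)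
    show "L (x \<circ> idx) (e i)" if "\<forall>j<m. x j \<le> G" "i < m" "x i = G" for x i
      using top[OF on_grid[OF that(1)], of "e i"] e_idx[OF that(2)] that(3) by (simp add: comp_def)
  qed (rule that)
  have lift: "cell_vertex A (q \<circ> idx) (r \<circ> idx)" if "\<forall>j<m. q j \<le> r j \<and> r j \<le> q j + 1" for r
    using that idx unfolding cell_vertex_def by auto
  show thesis
  proof (rule that[of "q \<circ> idx"], unfold fully_labelled_cell_def, intro ballI)
    fix a assume "a \<in> A"
    then show "\<exists>r s. cell_vertex A (q \<circ> idx) r \<and> cell_vertex A (q \<circ> idx) s \<and> L r a \<and> \<not> L s a"
      using cell idx lift by metis
  qed
qed

lemma abs_divide_diff_le:
  fixes N N' S S' M \<delta> :: real
  assumes "0 \<le> N" "N \<le> S" "N \<le> N'" "N' \<le> N + M" "S \<le> S'" "S' \<le> S + M"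
    and "0 < S" "M \<le> \<delta> * S"
  shows "\<bar>N' / S' - N / S\<bar> \<le> \<delta>"
proof -
  have M: "0 \<le> M" "M / S \<le> \<delta>"
    using assms by (auto simp: divide_le_eq)
  have "N' / S' \<le> (N + M) / S"
    using assms by (intro frac_le) auto
  then have upper: "N' / S' - N / S \<le> M / S"
    by (simp add: add_divide_distrib)
  have "N / S - N / (S + M) = N * M / (S * (S + M))"
    using assms M by (simp add: field_simps)
  also have "\<dots> \<le> S * M / (S * (S + M))"
    using assms M by (intro divide_right_mono mult_right_mono) auto
  also have "\<dots> \<le> M / S"
    using assms M by (simp add: frac_le)
  finally have "N / S - N / (S + M) \<le> M / S" .
  moreover have "N / (S + M) \<le> N' / S'"
    using assms by (intro frac_le) auto
  ultimately show ?thesis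
    using upper M by linarith
qed

text \<open>The offset keeps the
  normalising sum above \<open>card A * D\<close>, so a unit step in the grid moves every partial sum by at most
  \<open>1 / D\<close>.\<close>

definition grid_dist :: "'a set \<Rightarrow> real \<Rightarrow> ('a \<Rightarrow> nat) \<Rightarrow> 'a \<Rightarrow> real" where
  "grid_dist A D x a = (real (x a) + D) / (\<Sum>c\<in>A. real (x c) + D)"

lemma grid_dist_nonneg: "0 \<le> D \<Longrightarrow> 0 \<le> grid_dist A D x a"
  unfolding grid_dist_def by (simp add: sum_nonneg)

lemma sum_grid_dist_eq_1:
  assumes "finite A" "A \<noteq> {}" "0 < D"
  shows "sum (grid_dist A D x) A = 1"
proof -
  have "0 < (\<Sum>c\<in>A. real (x c) + D)"
    using assms by (intro sum_pos) auto
  then show ?thesis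
    unfolding grid_dist_def sum_divide_distrib[symmetric] by simp
qed

lemma grid_dist_cell_close:
  assumes "finite A" "A \<noteq> {}" "0 < D" "W \<subseteq> A" "cell_vertex A x y"
  shows "\<bar>sum (grid_dist A D y) W - sum (grid_dist A D x) W\<bar> \<le> 1 / D"
proof -
  define N where "N z = (\<Sum>a\<in>W. real (z a) + D)" for z
  define S where "S z = (\<Sum>a\<in>A. real (z a) + D)" for z
  have fW: "finite W"
    using assms finite_subset by blast
  have dist: "sum (grid_dist A D z) W = N z / S z" for z
    unfolding grid_dist_def N_def S_def sum_divide_distrib[symmetric] ..
  have step: "real (x a) \<le> real (y a)" "real (y a) \<le> real (x a) + 1" if "a \<in> A" for a
    using assms(5) that unfolding cell_vertex_def by auto
  have sum_step: "(\<Sum>a\<in>T. real (x a) + D) \<le> (\<Sum>a\<in>T. real (y a) + D)"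
    "(\<Sum>a\<in>T. real (y a) + D) \<le> (\<Sum>a\<in>T. real (x a) + D) + real (card T)"
    if "T \<subseteq> A" for T
  proof -
    show "(\<Sum>a\<in>T. real (x a) + D) \<le> (\<Sum>a\<in>T. real (y a) + D)"
      using step that by (intro sum_mono) auto
    have "(\<Sum>a\<in>T. real (y a) + D) \<le> (\<Sum>a\<in>T. (real (x a) + D) + 1)"
      using step that by (intro sum_mono) auto
    then show "(\<Sum>a\<in>T. real (y a) + D) \<le> (\<Sum>a\<in>T. real (x a) + D) + real (card T)"
      by (simp add: sum.distrib)
  qed
  have "N x \<le> N y" "S x \<le> S y" "N y \<le> N x + real (card W)" "S y \<le> S x + real (card A)"
    unfolding N_def S_def using sum_step assms(4) by auto
  moreover have "real (card W) \<le> real (card A)"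
    using assms card_mono by auto
  moreover have "0 \<le> N x" "N x \<le> S x"
    unfolding N_def S_def using assms fW by (auto intro!: sum_nonneg sum_mono2)
  moreover have "real (card A) * D \<le> S x"
    unfolding S_def by (simp add: sum.distrib sum_nonneg)
  moreover have "0 < real (card A) * D"
    using assms by (simp add: card_gt_0_iff)
  ultimately show ?thesis
    unfolding dist using \<open>0 < D\<close>
    by (intro abs_divide_diff_le[where M = "real (card A)"]) (auto simp: field_simps)
qed

lemma sum_grid_dist_zeros_le:
  assumes "finite A" "b \<in> A" "0 < D"
  shows "real (q b) * sum (grid_dist A D q) {a\<in>A. q a = 0} \<le> real (card A) * D"
proof -
  define S where "S = (\<Sum>c\<in>A. real (q c) + D)"
  define Z where "Z = {a\<in>A. q a = 0}"
  have "real (q b) + D \<le> S"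
    unfolding S_def using assms by (intro member_le_sum) auto
  then have "real (q b) \<le> S" "0 < S"
    using assms by auto
  have "real (card Z) \<le> real (card A)"
    unfolding Z_def using assms by (simp add: card_mono)
  have "real (q b) * sum (grid_dist A D q) Z = real (q b) * (real (card Z) * D / S)"
    unfolding grid_dist_def S_def Z_def by simp
  also have "\<dots> \<le> S * (real (card Z) * D / S)"
    using \<open>real (q b) \<le> S\<close> \<open>0 < D\<close> \<open>0 < S\<close> by (intro mult_right_mono) auto
  also have "\<dots> \<le> real (card A) * D"
    using \<open>0 < S\<close> \<open>0 < D\<close> \<open>real (card Z) \<le> real (card A)\<close> by simp
  finally show ?thesis
    unfolding Z_def .
qed

lemma card_less_shift_le:
  fixes f f' :: "'v \<Rightarrow> real"
  assumes "finite V" and close: "\<And>v. v \<in> V \<Longrightarrow> \<bar>f v - f' v\<bar> \<le> \<eta>"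
  shows "card {v\<in>V. f' v < t - \<eta>} \<le> card {v\<in>V. f v < t}"
proof (rule card_mono)
  show "finite {v\<in>V. f v < t}"
    using assms(1) by simp
  show "{v\<in>V. f' v < t - \<eta>} \<subseteq> {v\<in>V. f v < t}"
  proof safe
    fix v assume "v \<in> V" "f' v < t - \<eta>"
    moreover have "f v - f' v \<le> \<eta>"
      using close[OF \<open>v \<in> V\<close>] by (rule abs_le_D1)
    ultimately show "f v < t"
      by linarith
  qed
qed

lemma rank_mass_grid_dist_cell_close:
  assumes "finite A" "A \<noteq> {}" "0 < D" "cell_vertex A x y"
  shows "\<bar>rank_mass A r (grid_dist A D y) b - rank_mass A r (grid_dist A D x) b\<bar> \<le> 1 / D"
  unfolding rank_mass_def
  by (rule grid_dist_cell_close[OF assms(1-3) _ assms(4)]) (auto simp: weakly_preferred_def)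

definition grid_label ::
  "'v set \<Rightarrow> 'a set \<Rightarrow> ('v \<Rightarrow> ('a \<times> 'a) set) \<Rightarrow> real \<Rightarrow> real \<Rightarrow> nat \<Rightarrow> ('a \<Rightarrow> nat) \<Rightarrow> 'a \<Rightarrow> bool"
  where "grid_label V A P \<beta> D G x a \<longleftrightarrow> x a \<noteq> 0 \<and>
    (x a = G \<or> real (top_count V A P (grid_dist A D x) \<beta> a) \<le> \<beta> * real (card V))"

lemma ex_fully_labelled_grid_cell:
  assumes "finite A" "0 < G"
  obtains q where "fully_labelled_cell A (grid_label V A P \<beta> D G) q"
proof (rule kuhn_lemma_on_set[OF assms])
  show "\<not> grid_label V A P \<beta> D G x a" if "\<forall>c\<in>A. x c \<le> G" "a \<in> A" "x a = 0" for x a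
    using that unfolding grid_label_def by simp
  show "grid_label V A P \<beta> D G x a" if "\<forall>c\<in>A. x c \<le> G" "a \<in> A" "x a = G" for x a
    using that \<open>0 < G\<close> unfolding grid_label_def by simp
qed (rule that)

lemma fully_labelled_cell_top_face:
  assumes "finite V" "finite A" "A \<noteq> {}" "0 < D" "b \<in> A"
    and "fully_labelled_cell A (grid_label V A P \<beta> D G) q"
    and many: "\<beta> * real (card V) < real (top_count V A P (grid_dist A D q) (\<beta> - 1 / D) b)"
  shows "G \<le> q b + 1"
proof -
  obtain r where r: "cell_vertex A q r" "grid_label V A P \<beta> D G r b"
    using assms(5,6) unfolding fully_labelled_cell_def by blast
  have "top_count V A P (grid_dist A D q) (\<beta> - 1 / D) b \<le> top_count V A P (grid_dist A D r) \<beta> b"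
    unfolding top_count_def
    using rank_mass_grid_dist_cell_close[OF assms(2-4) r(1)] by (intro card_less_shift_le[OF assms(1)])
  then have "\<not> real (top_count V A P (grid_dist A D r) \<beta> b) \<le> \<beta> * real (card V)"
    using many by linarith
  then have "r b = G"
    using r(2) unfolding grid_label_def by blast
  moreover have "r b \<le> q b + 1"
    using assms(5) r(1) unfolding cell_vertex_def by blast
  ultimately show ?thesis
    by simp
qed

lemma fully_labelled_cell_heavy:
  assumes "finite V" "finite A" "A \<noteq> {}" "0 < D" "a \<in> A" "q a \<noteq> 0"
    and "fully_labelled_cell A (grid_label V A P \<beta> D G) q"
  shows "\<beta> * real (card V) < real (top_count V A P (grid_dist A D q) (\<beta> + 1 / D) a)"
proof -
  obtain s where s: "cell_vertex A q s" "\<not> grid_label V A P \<beta> D G s a"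
    using assms(5,7) unfolding fully_labelled_cell_def by blast
  have "q a \<le> s a"
    using assms(5) s(1) unfolding cell_vertex_def by blast
  then have "\<beta> * real (card V) < real (top_count V A P (grid_dist A D s) \<beta> a)"
    using assms(6) s(2) unfolding grid_label_def by auto
  moreover have "top_count V A P (grid_dist A D s) (\<beta> + 1 / D - 1 / D) a
      \<le> top_count V A P (grid_dist A D q) (\<beta> + 1 / D) a"
    unfolding top_count_def
  proof (rule card_less_shift_le[OF assms(1)])
    show "\<bar>rank_mass A (P v) (grid_dist A D q) a - rank_mass A (P v) (grid_dist A D s) a\<bar> \<le> 1 / D"
      for v
      using rank_mass_grid_dist_cell_close[OF assms(2-4) s(1)] by (subst abs_minus_commute)
  qed
  ultimately show ?thesis
    by simp
qed

lemma heavy_grid_point_zeros_mass_gt: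
  fixes V :: "'v set" and \<beta> D :: real and q :: "'a \<Rightarrow> nat"
  defines "K \<equiv> of_int \<lfloor>\<beta> * real (card V)\<rfloor> + 1"
  assumes el: "election V A P" and "0 \<le> \<beta>" "0 < D"
    and small: "2 * real (card V) \<le> (K - \<beta> * real (card V)) * D"
    and heavy: "\<And>a. a \<in> A \<Longrightarrow> q a \<noteq> 0 \<Longrightarrow>
      \<beta> * real (card V) < real (top_count V A P (grid_dist A D q) (\<beta> + 1 / D) a)"
  shows "(K - \<beta> * real (card V)) / 2 < K * sum (grid_dist A D q) {a\<in>A. q a = 0}"
proof -
  have fin: "finite A" "A \<noteq> {}"
    using el unfolding election_def by auto
  define n where "n = real (card V)"
  define y where "y = grid_dist A D q"
  define Z where "Z = {a\<in>A. q a = 0}"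
  have "0 < K"
    unfolding K_def using \<open>0 \<le> \<beta>\<close> by (simp add: add_nonneg_pos)
  have counts: "K \<le> real (top_count V A P y (\<beta> + 1 / D) a)" if "a \<in> A - Z" for a
  proof -
    have "\<lfloor>\<beta> * n\<rfloor> < int (top_count V A P y (\<beta> + 1 / D) a)"
      using heavy[of a] that unfolding y_def Z_def n_def by (simp add: floor_less_iff)
    then show ?thesis
      unfolding K_def n_def by linarith
  qed
  have "K * (1 - sum y Z) < n * (\<beta> + 1 / D)"
    unfolding n_def
  proof (rule top_counts_ge_imp_less[OF el, where K = K and Z = Z])
    show "0 \<le> y c" for c
      unfolding y_def using \<open>0 < D\<close> by (simp add: grid_dist_nonneg)
    show "sum y A = 1"
      unfolding y_def using fin \<open>0 < D\<close> by (rule sum_grid_dist_eq_1)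
    show "0 < \<beta> + 1 / D"
      using \<open>0 \<le> \<beta>\<close> \<open>0 < D\<close> by (simp add: add_nonneg_pos)
    show "0 \<le> K" "Z \<subseteq> A"
      using \<open>0 < K\<close> unfolding Z_def by auto
  qed (rule counts)
  moreover have "n * (1 / D) \<le> (K - \<beta> * n) / 2"
    using small \<open>0 < D\<close> unfolding n_def by (simp add: field_simps)
  moreover have "K * (1 - sum y Z) = K - K * sum y Z" "n * (\<beta> + 1 / D) = \<beta> * n + n * (1 / D)"
    by (simp_all add: algebra_simps)
  ultimately show ?thesis
    unfolding y_def Z_def n_def by argo
qed

lemma fully_labelled_cell_top_count_le:
  fixes V :: "'v set" and \<beta> D :: real and G :: nat and q :: "'a \<Rightarrow> nat"
  defines "K \<equiv> of_int \<lfloor>\<beta> * real (card V)\<rfloor> + 1"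
  assumes el: "election V A P" and "0 \<le> \<beta>" "0 < D" "b \<in> A"
    and small: "2 * real (card V) \<le> (K - \<beta> * real (card V)) * D"
    and fine: "2 * K * real (card A) * D < (K - \<beta> * real (card V)) * (real G - 1)"
    and cell: "fully_labelled_cell A (grid_label V A P \<beta> D G) q"
  shows "real (top_count V A P (grid_dist A D q) (\<beta> - 1 / D) b) \<le> \<beta> * real (card V)"
proof (rule ccontr)
  assume many: "\<not> ?thesis"
  have fin: "finite V" "finite A" "A \<noteq> {}"
    using el unfolding election_def by auto
  define g where "g = K - \<beta> * real (card V)"
  define Z where "Z = {a\<in>A. q a = 0}"
  have "0 < K" "0 < g"
    unfolding g_def K_def using \<open>0 \<le> \<beta>\<close> real_of_int_floor_add_one_gt[of "\<beta> * real (card V)"]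
    by (simp_all add: add_nonneg_pos)
  have "G \<le> q b + 1"
    using fully_labelled_cell_top_face[OF fin \<open>0 < D\<close> \<open>b \<in> A\<close> cell] many by simp
  have heavy: "\<beta> * real (card V) < real (top_count V A P (grid_dist A D q) (\<beta> + 1 / D) a)"
    if "a \<in> A" "q a \<noteq> 0" for a
    by (rule fully_labelled_cell_heavy[OF fin \<open>0 < D\<close> that cell])
  have "g / 2 < K * sum (grid_dist A D q) Z"
    using heavy_grid_point_zeros_mass_gt[where q = q, OF el \<open>0 \<le> \<beta>\<close> \<open>0 < D\<close> small[unfolded K_def] heavy]
    unfolding g_def Z_def K_def .
  then have "g / 2 * real (q b) \<le> K * sum (grid_dist A D q) Z * real (q b)"
    by (intro mult_right_mono) auto
  also have "\<dots> \<le> K * (real (card A) * D)"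
    using mult_left_mono[OF sum_grid_dist_zeros_le[where q = q, OF fin(2) \<open>b \<in> A\<close> \<open>0 < D\<close>], of K]
      \<open>0 < K\<close>
    unfolding Z_def by (simp add: algebra_simps)
  finally have "g * real (q b) \<le> 2 * K * real (card A) * D"
    by linarith
  moreover have "real G - 1 \<le> real (q b)"
    using \<open>G \<le> q b + 1\<close> by linarith
  then have "g * (real G - 1) \<le> g * real (q b)"
    using \<open>0 < g\<close> by (intro mult_left_mono) auto
  ultimately show False
    using fine unfolding g_def by linarith
qed

lemma top_count_mono:
  assumes "finite V" "t \<le> t'"
  shows "top_count V A P p t a \<le> top_count V A P p t' a"
  unfolding top_count_def using assms by (intro card_mono) auto

lemma ex_rank_quantile_distribution:
  assumes el: "election V A P" and "0 \<le> \<beta>" "0 < \<delta>"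
  obtains p where "\<forall>c\<in>A. 0 \<le> p c" "sum p A = 1"
    "\<forall>b\<in>A. real (top_count V A P p (\<beta> - \<delta>) b) \<le> \<beta> * real (card V)"
proof -
  have fin: "finite V" "finite A" "A \<noteq> {}"
    using el unfolding election_def by auto
  define n where "n = real (card V)"
  define K :: real where "K = of_int \<lfloor>\<beta> * n\<rfloor> + 1"
  define g where "g = K - \<beta> * n"
  have "0 < K" "0 < g"
    unfolding g_def K_def n_def using \<open>0 \<le> \<beta>\<close> real_of_int_floor_add_one_gt[of "\<beta> * real (card V)"]
    by (simp_all add: add_nonneg_pos)
  define D where "D = max (1 / \<delta>) (2 * n / g)"
  have "0 < D" "1 / \<delta> \<le> D" "2 * n / g \<le> D"
    unfolding D_def using \<open>0 < \<delta>\<close> by (auto simp: less_max_iff_disj)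
  then have "1 / D \<le> \<delta>" and small: "2 * n \<le> g * D"
    using \<open>0 < \<delta>\<close> \<open>0 < g\<close> by (simp_all add: field_simps)
  obtain G :: nat where G: "2 * K * real (card A) * D / g + 1 < real G"
    \<comment> \<open>so that a coordinate reaching \<open>G - 1\<close> leaves mass below \<open>g / (2 * K)\<close> to the zero coordinates\<close>
    using reals_Archimedean2 by blast
  moreover have "0 \<le> 2 * K * real (card A) * D / g"
    using \<open>0 < K\<close> \<open>0 < D\<close> \<open>0 < g\<close> by simp
  ultimately have "0 < G"
    by simp
  from G have "2 * K * real (card A) * D / g < real G - 1"
    by linarith
  then have fine: "2 * K * real (card A) * D < g * (real G - 1)"
    using \<open>0 < g\<close> by (simp add: pos_divide_less_eq mult.commute)
  obtain q where cell: "fully_labelled_cell A (grid_label V A P \<beta> D G) q"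
    using ex_fully_labelled_grid_cell[OF fin(2) \<open>0 < G\<close>] by blast
  show thesis
  proof (rule that)
    show "\<forall>c\<in>A. 0 \<le> grid_dist A D q c"
      using \<open>0 < D\<close> by (simp add: grid_dist_nonneg)
    show "sum (grid_dist A D q) A = 1"
      using fin(2,3) \<open>0 < D\<close> by (rule sum_grid_dist_eq_1)
    show "\<forall>b\<in>A. real (top_count V A P (grid_dist A D q) (\<beta> - \<delta>) b) \<le> \<beta> * real (card V)"
    proof
      fix b assume "b \<in> A"
      have "top_count V A P (grid_dist A D q) (\<beta> - \<delta>) b \<le> top_count V A P (grid_dist A D q) (\<beta> - 1 / D) b"
        using \<open>1 / D \<le> \<delta>\<close> by (intro top_count_mono[OF fin(1)]) simp
      moreover have "real (top_count V A P (grid_dist A D q) (\<beta> - 1 / D) b) \<le> \<beta> * real (card V)"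
        using fully_labelled_cell_top_count_le[OF el \<open>0 \<le> \<beta>\<close> \<open>0 < D\<close> \<open>b \<in> A\<close> _ _ cell]
          small fine unfolding g_def K_def n_def by (simp add: mult.commute)
      ultimately show "real (top_count V A P (grid_dist A D q) (\<beta> - \<delta>) b) \<le> \<beta> * real (card V)"
        by linarith
    qed
  qed
qed

text \<open>The shortest initial segment of the ranking \<open>r\<close> whose \<open>p\<close>-mass reaches \<open>\<theta>\<close>.\<close>

definition top_segment :: "'a set \<Rightarrow> ('a \<times> 'a) set \<Rightarrow> ('a \<Rightarrow> real) \<Rightarrow> real \<Rightarrow> 'a set" where
  "top_segment A r p \<theta> = {c\<in>A. \<forall>d\<in>A. (d, c) \<in> r \<longrightarrow> rank_mass A r p d < \<theta>}"

lemma sum_top_segment_ge: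
  assumes slo: "strict_linear_order_on A r" and "finite A"
    and nonneg: "\<And>c. c \<in> A \<Longrightarrow> 0 \<le> p c" and "sum p A = 1" and "\<theta> \<le> 1"
  shows "\<theta> \<le> sum p (top_segment A r p \<theta>)"
proof (cases "A - top_segment A r p \<theta> = {}")
  case True
  then have "top_segment A r p \<theta> = A"
    unfolding top_segment_def by auto
  then show ?thesis
    using \<open>sum p A = 1\<close> \<open>\<theta> \<le> 1\<close> by simp
next
  case False
  let ?U = "top_segment A r p \<theta>"
  obtain c where c: "c \<in> A - ?U" "\<And>d. d \<in> A - ?U \<Longrightarrow> d \<noteq> c \<Longrightarrow> (c, d) \<in> r"
    using strict_linear_order_on_has_top[OF slo _ False] \<open>finite A\<close> by auto
  then obtain d where d: "d \<in> A" "(d, c) \<in> r" "\<theta> \<le> rank_mass A r p d"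
    unfolding top_segment_def by auto
  have "trans r" "irrefl r"
    using slo unfolding strict_linear_order_on_def by auto
  have "weakly_preferred A r d \<subseteq> ?U"
  proof
    fix x assume x: "x \<in> weakly_preferred A r d"
    then have "(x, c) \<in> r"
      using d(2) \<open>trans r\<close> unfolding weakly_preferred_def trans_def by blast
    moreover have "x \<in> A"
      using x unfolding weakly_preferred_def by auto
    ultimately show "x \<in> ?U"
      using c(2)[of x] \<open>trans r\<close> \<open>irrefl r\<close> unfolding trans_def irrefl_def by blast
  qed
  then have "rank_mass A r p d \<le> sum p ?U"
    unfolding rank_mass_def using \<open>finite A\<close> nonneg
    by (intro sum_mono2) (auto simp: top_segment_def)
  then show ?thesis
    using d(3) by linarith
qed

lemma card_prefers_over_set_le:
  assumes "finite V" "a \<in> A"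
  shows "card {v\<in>V. prefers_over_set P v a C}
    \<le> top_count V A P p \<theta> a + card {v\<in>V. top_segment A (P v) p \<theta> \<inter> C = {}}"
proof -
  have "{v\<in>V. prefers_over_set P v a C}
      \<subseteq> {v\<in>V. rank_mass A (P v) p a < \<theta>} \<union> {v\<in>V. top_segment A (P v) p \<theta> \<inter> C = {}}"
  proof safe
    fix v c assume "v \<in> V" "prefers_over_set P v a C" "c \<in> top_segment A (P v) p \<theta>" "c \<in> C"
    then have "(a, c) \<in> P v"
      unfolding prefers_over_set_def by blast
    then show "rank_mass A (P v) p a < \<theta>"
      using \<open>c \<in> top_segment A (P v) p \<theta>\<close> \<open>a \<in> A\<close> unfolding top_segment_def by blast
  qed
  then have "card {v\<in>V. prefers_over_set P v a C}
      \<le> card ({v\<in>V. rank_mass A (P v) p a < \<theta>} \<union> {v\<in>V. top_segment A (P v) p \<theta> \<inter> C = {}})"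
    using \<open>finite V\<close> by (intro card_mono) auto
  also have "\<dots> \<le> top_count V A P p \<theta> a + card {v\<in>V. top_segment A (P v) p \<theta> \<inter> C = {}}"
    unfolding top_count_def by (rule card_Un_le)
  finally show ?thesis .
qed

lemma power_add_le_add_mult:
  fixes x d :: real
  assumes "0 \<le> x" "0 \<le> d" "x + d \<le> 1"
  shows "(x + d) ^ k \<le> x ^ k + real k * d"
proof (induction k)
  case 0
  show ?case
    by simp
next
  case (Suc k)
  have "x ^ k \<le> 1"
    using assms by (intro power_le_one) auto
  have "(x + d) ^ Suc k \<le> (x + d) * (x ^ k + real k * d)"
    using Suc assms by (simp add: mult_left_mono)
  also have "\<dots> = x ^ Suc k + d * x ^ k + (x + d) * (real k * d)"
    by (simp add: algebra_simps)
  also have "\<dots> \<le> x ^ Suc k + d * 1 + 1 * (real k * d)"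
    using assms \<open>x ^ k \<le> 1\<close> by (intro add_mono mult_left_mono mult_right_mono) auto
  finally show ?case
    by (simp add: algebra_simps)
qed

lemma ex_committee_approx_undominated:
  assumes el: "election V A P" and "0 < \<beta>" "\<beta> \<le> 1" "0 < \<epsilon>"
  shows "\<exists>C\<subseteq>A. card C \<le> k \<and> (\<forall>a\<in>A.
    real (card {v\<in>V. prefers_over_set P v a C}) \<le> (\<beta> + (1 - \<beta>) ^ k + \<epsilon>) * real (card V))"
proof -
  have fin: "finite V" "finite A" "A \<noteq> {}"
    using el unfolding election_def by auto
  define \<delta> where "\<delta> = min \<beta> (\<epsilon> / (real k + 1))"
  have "0 < \<delta>" "\<delta> \<le> \<beta>"
    unfolding \<delta>_def using \<open>0 < \<beta>\<close> \<open>0 < \<epsilon>\<close> by auto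
  have "real k * \<delta> \<le> real k * (\<epsilon> / (real k + 1))"
    unfolding \<delta>_def by (intro mult_left_mono) auto
  also have "\<dots> \<le> \<epsilon>"
    using \<open>0 < \<epsilon>\<close> by (simp add: field_simps)
  finally have "real k * \<delta> \<le> \<epsilon>" .
  obtain p where nonneg: "\<forall>c\<in>A. 0 \<le> p c" and "sum p A = 1"
    and few: "\<forall>b\<in>A. real (top_count V A P p (\<beta> - \<delta>) b) \<le> \<beta> * real (card V)"
    using ex_rank_quantile_distribution[OF el less_imp_le[OF \<open>0 < \<beta>\<close>] \<open>0 < \<delta>\<close>] by blast
  define U where "U v = top_segment A (P v) p (\<beta> - \<delta>)" for v
  have "U v \<subseteq> A \<and> \<beta> - \<delta> \<le> sum p (U v)" if "v \<in> V" for v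
    using el that sum_top_segment_ge[OF _ fin(2) nonneg[rule_format] \<open>sum p A = 1\<close>] \<open>\<beta> \<le> 1\<close> \<open>0 < \<delta>\<close>
    unfolding U_def election_def top_segment_def by auto
  then obtain C where C: "C \<subseteq> A" "card C \<le> k"
    and missed: "real (card {v\<in>V. U v \<inter> C = {}}) \<le> (1 - (\<beta> - \<delta>)) ^ k * real (card V)"
    using greedy_hitting_set[OF fin(2,3) nonneg[rule_format] \<open>sum p A = 1\<close> fin(1), of U "\<beta> - \<delta>" k]
      \<open>\<beta> \<le> 1\<close> \<open>0 < \<delta>\<close> by auto
  have "(1 - (\<beta> - \<delta>)) ^ k \<le> (1 - \<beta>) ^ k + real k * \<delta>"
    using power_add_le_add_mult[of "1 - \<beta>" \<delta> k] \<open>\<beta> \<le> 1\<close> \<open>0 < \<delta>\<close> \<open>\<delta> \<le> \<beta>\<close>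
    by (simp add: algebra_simps)
  then have "(1 - (\<beta> - \<delta>)) ^ k * real (card V) \<le> ((1 - \<beta>) ^ k + \<epsilon>) * real (card V)"
    using \<open>real k * \<delta> \<le> \<epsilon>\<close> by (intro mult_right_mono) auto
  moreover have "card {v\<in>V. prefers_over_set P v a C}
      \<le> top_count V A P p (\<beta> - \<delta>) a + card {v\<in>V. U v \<inter> C = {}}" if "a \<in> A" for a
    unfolding U_def by (rule card_prefers_over_set_le[OF fin(1) that])
  ultimately have "real (card {v\<in>V. prefers_over_set P v a C})
      \<le> (\<beta> + (1 - \<beta>) ^ k + \<epsilon>) * real (card V)" if "a \<in> A" for a
    using few missed that by (fastforce simp: algebra_simps)
  then show ?thesis
    using C by blast
qed

lemma undominated_empty:
  assumes "finite V" "1 \<le> \<alpha>"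
  shows "undominated V A P \<alpha> {}"
proof -
  have "real (card {v\<in>V. prefers_over_set P v a {}}) \<le> \<alpha> * real (card V)" for a
    using card_mono[OF \<open>finite V\<close>, of "{v\<in>V. prefers_over_set P v a {}}"] \<open>1 \<le> \<alpha>\<close>
    by (auto intro: order_trans[OF _ mult_right_mono[of 1 \<alpha>]])
  then show ?thesis
    unfolding undominated_def by (simp add: le_floor_iff)
qed

theorem theorem1:
  fixes V :: "'v set" and A :: "'a set" and P :: "'v \<Rightarrow> ('a \<times> 'a) set"
    and k :: nat and \<beta> :: real
  assumes "election V A P" and "k \<ge> 1" and "0 \<le> \<beta>" and "\<beta> \<le> 1"
  shows "\<exists>C. C \<subseteq> A \<and> card C \<le> k \<and> undominated V A P (\<beta> + (1 - \<beta>) ^ k) C"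
proof (cases "\<beta> = 0")
  case True
  then show ?thesis
    using undominated_empty[of V 1] assms(1) unfolding election_def by (intro exI[of _ "{}"]) simp
next
  case False
  define n where "n = real (card V)"
  define \<alpha> where "\<alpha> = \<beta> + (1 - \<beta>) ^ k"
  define \<epsilon> where "\<epsilon> = (of_int \<lfloor>\<alpha> * n\<rfloor> + 1 - \<alpha> * n) / (n + 1)"
  have "0 < \<epsilon>"
    unfolding \<epsilon>_def n_def by (intro divide_pos_pos) linarith+
  then obtain C where C: "C \<subseteq> A" "card C \<le> k"
    and bound: "\<forall>a\<in>A. real (card {v\<in>V. prefers_over_set P v a C}) \<le> (\<alpha> + \<epsilon>) * n"
    using ex_committee_approx_undominated[OF assms(1), of \<beta> \<epsilon> k] False assms(3,4)
    unfolding \<alpha>_def n_def by auto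
  have "(\<alpha> + \<epsilon>) * n < of_int \<lfloor>\<alpha> * n\<rfloor> + 1"
    using \<open>0 < \<epsilon>\<close> unfolding \<epsilon>_def n_def by (simp add: field_simps)
  then have "int (card {v\<in>V. prefers_over_set P v a C}) \<le> \<lfloor>\<alpha> * n\<rfloor>" if "a \<in> A" for a
    using bound that by fastforce
  then show ?thesis
    using C unfolding undominated_def \<alpha>_def n_def by auto
qed

end
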